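(* Let $\Lambda=\Lambda_{({\bf A},{\bf B},{\bf c})}:\mathcal L(\mathcal H^{\otimes N'})\to\mathcal L(\mathcal H^{\otimes N})$ be a Gaussian channel, applied on Alice's side. The following are equivalent: (i) $\Lambda$ is Gaussian incompatibility breaking; (ii) $\Lambda$ is Gaussian steerability breaking; (iii) $\Lambda$ breaks the steerability of all EPR-states $\rho_r$, $r\ge0$.
   Context: For $n\ge1$, $\mathcal H^{\otimes n}=L^2(\mathbb R^n)$ with canonical position and momentum operators $Q_j,P_j$, ${\bf R}=(Q_1,P_1,\ldots,Q_n,P_n)^T$, ${\bf \Omega}=\bigoplus_{j=1}^n\begin{pmatrix}0&1\\-1&0\end{pmatrix}$ (size fixed by context), and Weyl operators $W({\bf x})=e^{-i{\bf x}^T{\bf \Omega R}}$. A Gaussian state $\rho$ has $\mathrm{tr}[\rho W({\bf x})]=e^{-\frac14{\bf x}^T{\bf \Omega}^T{\bf V\Omega x}-i({\bf \Omega r})^T{\bf x}}$, with covariance matrix $V_{ij}=\mathrm{tr}[\rho\{R_i-r_i,R_j-r_j\}]$, $r_j=\mathrm{tr}[\rho R_j]$; ${\bf V}+i{\bf \Omega}\ge0$. A Gaussian channel is a normal unital completely positive map $\Lambda:\mathcal L(\mathcal H^{\otimes N'})\to\mathcal L(\mathcal H^{\otimes N})$ (Heisenberg picture) with $\Lambda(W({\bf x}))=W({\bf Ax})e^{-\frac14{\bf x}^T{\bf Bx}-i{\bf c}^T{\bf x}}$, ${\bf A}$ real $2N\times2N'$, ${\bf B}$ real $2N'\times2N'$,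 ${\bf c}\in\mathbb R^{2N'}$, with ${\bf B}+i{\bf \Omega}-i{\bf A}^T{\bf \Omega A}\ge0$. An observable is a POVM $\mathsf{E}:\mathcal B(\mathbb R^M)\to\mathcal L(\mathcal H^{\otimes n})$; it is Gaussian if $\int e^{i{\bf p}^T{\bf x}}\,d\mathsf{E}({\bf x})=W({\bf Kp})e^{-\frac14{\bf p}^T{\bf Lp}-i{\bf m}^T{\bf p}}$ with ${\bf K}$ real $2n\times M$, ${\bf L}$ real $M\times M$, ${\bf L}-i{\bf K}^T{\bf \Omega K}\ge0$, ${\bf m}\in\mathbb R^M$; $\Lambda(\mathsf{E})$ denotes $X\mapsto\Lambda(\mathsf{E}(X))$. A Gaussian postprocessing is a Markov kernel $f:\mathcal B(\mathbb R^{M'})\times\mathbb R^M\to[0,1]$ with $\int e^{i{\bf p}^T{\bf y}}f(d{\bf y},{\bf x})=e^{i({\bf A}'{\bf p})^T{\bf x}}e^{-\frac14{\bf p}^T{\bf B}'{\bf p}-i{\bf c}'^T{\bf p}}$ for some real $M\times M'$ matrix ${\bf A}'$, real positive semidefinite ${\bf B}'$, vector ${\bf c}'$; $\mathsf{E}$ is obtained from $\mathsf{G}$ via $f$ if $\mathsf{E}(X)=\int f(X,{\bf x})\,d\mathsf{G}({\bf x})$. A collection of Gaussian observables is Gaussian compatible if there is a Gaussian observable from which each member is obtained via some Gaussian postprocessing; $\Lambda$ is Gaussian incompatibility breaking if $\{\Lambda(\mathsf{E}):\mathsf{E}$ Gaussian observable on $\mathcal H^{\otimes N'}\}$ is Gaussian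 compatible. Steering: a bipartite Gaussian state (Alice's part first, Bob's part second) with covariance matrix ${\bf V}$ is called non-steerable (by Alice's Gaussian measurements) if ${\bf V}+i({\bf 0}\oplus{\bf \Omega})\ge0$, where ${\bf 0}$ acts on Alice's phase space and ${\bf \Omega}$ on Bob's. If a bipartite Gaussian state with covariance matrix ${\bf V}_0$ (Alice having $N$ modes) is subjected to $\Lambda_{({\bf A},{\bf B},{\bf c})}$ on Alice's side, the resulting Gaussian state has covariance matrix ${\bf V}={\bf \Omega}({\bf A}\oplus{\bf I})^T{\bf \Omega}^T{\bf V}_0{\bf \Omega}({\bf A}\oplus{\bf I}){\bf \Omega}^T+{\bf \Omega}({\bf B}\oplus{\bf 0}){\bf \Omega}^T$; $\Lambda$ breaks the steerability of that state if this ${\bf V}$ satisfies ${\bf V}+i({\bf 0}\oplus{\bf \Omega})\ge0$. $\Lambda$ is Gaussian steerability breaking if it breaks the steerability of every bipartite Gaussian state. The EPR-states $\rho_r$ ($r\ge0$) are the Gaussian pure states on $N+N$ modes with covariance matrix ${\bf V}_0(r)=\begin{pmatrix}\cosh r\,{\bf I}&\sinh r\,{\bf Z}\\ \sinh r\,{\bf Z}&\cosh r\,{\bf I}\end{pmatrix}$, ${\bf Z}=\bigoplus_{j=1}^N\sigma_z$. *)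

theory Defs
  imports Complex_Main "Jordan_Normal_Form.Matrix"
begin

text \<open>Symplectic form Omega on n modes: direct sum of n copies of [[0,1],[-1,0]].\<close>
definition omega :: "nat \<Rightarrow> real mat" where
  "omega n = mat (2*n) (2*n) (\<lambda>(i,j).
      if even i \<and> j = i + 1 then 1 else if odd i \<and> i = j + 1 then -1 else 0)"

definition cmat :: "real mat \<Rightarrow> complex mat" where
  "cmat M = map_mat complex_of_real M"

definition psd :: "complex mat \<Rightarrow> bool" where
  "psd M \<longleftrightarrow> (\<exists>n. M \<in> carrier_mat n n \<and>
     (\<forall>v \<in> carrier_vec n.
        let q = (\<Sum>i<n. \<Sum>j<n. cnj (v $ i) * M $$ (i,j) * v $ j)
        in Im q = 0 \<and> Re q \<ge> 0))"

definition dsum :: "real mat \<Rightarrow> real mat \<Rightarrow> real mat" where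
  "dsum P Q = four_block_mat P (0\<^sub>m (dim_row P) (dim_col Q)) (0\<^sub>m (dim_row Q) (dim_col P)) Q"

text \<open>Gaussian channel Lambda_(A,B,c) : L(H^{N'}) \<rightarrow> L(H^N) (Heisenberg picture),
  identified with its parameters.\<close>
definition gaussian_channel :: "nat \<Rightarrow> nat \<Rightarrow> real mat \<Rightarrow> real mat \<Rightarrow> real vec \<Rightarrow> bool" where
  "gaussian_channel N N' A B c \<longleftrightarrow>
     A \<in> carrier_mat (2*N) (2*N') \<and> B \<in> carrier_mat (2*N') (2*N') \<and> c \<in> carrier_vec (2*N') \<and>
     psd (cmat B + \<i> \<cdot>\<^sub>m cmat (omega N') - \<i> \<cdot>\<^sub>m cmat (transpose_mat A * omega N * A))"

text \<open>A Gaussian observable on n modes with outcome space R^M is (uniquely) determined by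
  its parameters (K, L, m) in its characteristic function
  W(Kp) exp(-1/4 p^T L p - i m^T p); every admissible triple defines one.\<close>
type_synonym gobs = "real mat \<times> real mat \<times> real vec"

definition outdim :: "gobs \<Rightarrow> nat" where
  "outdim E = dim_col (fst E)"

definition gaussian_obs :: "nat \<Rightarrow> gobs \<Rightarrow> bool" where
  "gaussian_obs n E \<longleftrightarrow> (case E of (K, L, m) \<Rightarrow>
     let M = dim_col K in M \<ge> 1 \<and>
     K \<in> carrier_mat (2*n) M \<and> L \<in> carrier_mat M M \<and> m \<in> carrier_vec M \<and>
     psd (cmat L - \<i> \<cdot>\<^sub>m cmat (transpose_mat K * omega n * K)))"

text \<open>Gaussian postprocessing R^M \<rightarrow> R^M', identified with its parameters (A', B', c').\<close>
definition gaussian_postproc :: "nat \<Rightarrow> nat \<Rightarrow> gobs \<Rightarrow> bool" where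
  "gaussian_postproc M M' f \<longleftrightarrow> (case f of (A', B', c') \<Rightarrow>
     A' \<in> carrier_mat M M' \<and> B' \<in> carrier_mat M' M' \<and> c' \<in> carrier_vec M' \<and> psd (cmat B'))"

text \<open>Parameters of the observable E(X) = \<integral> f(X,x) dG(x) obtained from G via f.\<close>
definition postprocess :: "gobs \<Rightarrow> gobs \<Rightarrow> gobs" where
  "postprocess G f = (case G of (KG, LG, mG) \<Rightarrow> case f of (A', B', c') \<Rightarrow>
     (KG * A', transpose_mat A' * LG * A' + B', transpose_mat A' *\<^sub>v mG + c'))"

definition obtained_via :: "gobs \<Rightarrow> gobs \<Rightarrow> gobs \<Rightarrow> bool" where
  "obtained_via E G f \<longleftrightarrow> E = postprocess G f"

definition gaussian_compatible :: "nat \<Rightarrow> gobs set \<Rightarrow> bool" where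
  "gaussian_compatible n S \<longleftrightarrow>
     (\<exists>G. gaussian_obs n G \<and>
        (\<forall>E\<in>S. \<exists>f. gaussian_postproc (outdim G) (outdim E) f \<and> obtained_via E G f))"

text \<open>Parameters of the observable Lambda(E) = Lambda \<circ> E.\<close>
definition channel_obs :: "real mat \<Rightarrow> real mat \<Rightarrow> real vec \<Rightarrow> gobs \<Rightarrow> gobs" where
  "channel_obs A B c E = (case E of (K, L, m) \<Rightarrow>
     (A * K, L + transpose_mat K * B * K, m + transpose_mat K *\<^sub>v c))"

definition gaussian_incompatibility_breaking ::
  "nat \<Rightarrow> nat \<Rightarrow> real mat \<Rightarrow> real mat \<Rightarrow> real vec \<Rightarrow> bool" where
  "gaussian_incompatibility_breaking N N' A B c \<longleftrightarrow>
     gaussian_compatible N (channel_obs A B c ` {E. gaussian_obs N' E})"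

definition gaussian_cov :: "nat \<Rightarrow> real mat \<Rightarrow> bool" where
  "gaussian_cov n V \<longleftrightarrow> V \<in> carrier_mat (2*n) (2*n) \<and> psd (cmat V + \<i> \<cdot>\<^sub>m cmat (omega n))"

text \<open>Non-steerability (by Alice's Gaussian measurements) of a bipartite Gaussian state
  with Alice having nA modes and Bob nB modes.\<close>
definition non_steerable :: "nat \<Rightarrow> nat \<Rightarrow> real mat \<Rightarrow> bool" where
  "non_steerable nA nB V \<longleftrightarrow>
     psd (cmat V + \<i> \<cdot>\<^sub>m cmat (dsum (0\<^sub>m (2*nA) (2*nA)) (omega nB)))"

text \<open>Covariance matrix after applying Lambda_(A,B,c) on Alice's side
  (Alice N modes \<rightarrow> N' modes, Bob M modes).\<close>
definition channel_cov :: "nat \<Rightarrow> nat \<Rightarrow> nat \<Rightarrow> real mat \<Rightarrow> real mat \<Rightarrow> real mat \<Rightarrow> real mat" where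
  "channel_cov N N' M A B V0 =
     omega (N'+M) * transpose_mat (dsum A (1\<^sub>m (2*M))) * transpose_mat (omega (N+M)) * V0
       * omega (N+M) * dsum A (1\<^sub>m (2*M)) * transpose_mat (omega (N'+M))
     + omega (N'+M) * dsum B (0\<^sub>m (2*M) (2*M)) * transpose_mat (omega (N'+M))"

definition breaks_steerability :: "nat \<Rightarrow> nat \<Rightarrow> nat \<Rightarrow> real mat \<Rightarrow> real mat \<Rightarrow> real mat \<Rightarrow> bool" where
  "breaks_steerability N N' M A B V0 \<longleftrightarrow> non_steerable N' M (channel_cov N N' M A B V0)"

definition gaussian_steerability_breaking ::
  "nat \<Rightarrow> nat \<Rightarrow> real mat \<Rightarrow> real mat \<Rightarrow> bool" where
  "gaussian_steerability_breaking N N' A B \<longleftrightarrow>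
     (\<forall>M V0. M \<ge> 1 \<longrightarrow> gaussian_cov (N+M) V0 \<longrightarrow> breaks_steerability N N' M A B V0)"

definition epr_cov :: "nat \<Rightarrow> real \<Rightarrow> real mat" where
  "epr_cov N r = (let Z = mat (2*N) (2*N) (\<lambda>(i,j). if i = j then (if even i then 1 else -1) else 0)
     in four_block_mat (cosh r \<cdot>\<^sub>m 1\<^sub>m (2*N)) (sinh r \<cdot>\<^sub>m Z) (sinh r \<cdot>\<^sub>m Z) (cosh r \<cdot>\<^sub>m 1\<^sub>m (2*N)))"

end

theory Submission
  imports Defs
begin

(* All three properties turn out to be equivalent to the inequality B >= i A^T Omega A
   (noise_dominates), which says that (A, B, 0) is itself a Gaussian observable on N modes.
   Positivity of S + i T with S real and T real antisymmetric means that S is symmetric and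
   2 T(a,b) <= S(a,a) + S(b,b) for all real a, b; every argument below works with these real forms.

   If B >= i A^T Omega A, each Lambda(E) is obtained from (A, B, 0) by postprocessing with E
   (shifted by K^T c), and for any initial state the steering condition of the output is the sum
   of this inequality and the uncertainty relation of the state.  Conversely, if the images of the
   rank-one observables measuring a^T R have a common parent G = (K, L, m), then A a = K g with
   g^T L g <= a^T B a, and the uncertainty relation of G gives the inequality; the EPR state with
   squeezing r gives it up to an error of order exp (-r), which vanishes as r -> infinity. *)

definition bilin :: "real mat \<Rightarrow> real vec \<Rightarrow> real vec \<Rightarrow> real" where
  "bilin M x y = x \<bullet> (M *\<^sub>v y)"

lemma bilin_sum:
  assumes "M \<in> carrier_mat n m" "y \<in> carrier_vec m"
  shows "bilin M x y = (\<Sum>i<n. \<Sum>j<m. x$i * M$$(i,j) * y$j)"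
  using assms by (auto simp: bilin_def scalar_prod_def atLeast0LessThan sum_distrib_left
      mult.assoc intro!: sum.cong)

lemma bilin_diff:
  assumes "X \<in> carrier_mat n m" "Y \<in> carrier_mat n m" "y \<in> carrier_vec m"
  shows "bilin (X - Y) x y = bilin X x y - bilin Y x y"
proof -
  have "X - Y \<in> carrier_mat n m" using assms by (simp add: minus_carrier_mat)
  then show ?thesis using assms by (simp add: bilin_sum[of _ n m] sum_subtractf algebra_simps)
qed

lemma bilin_uminus:
  assumes "X \<in> carrier_mat n m" "y \<in> carrier_vec m"
  shows "bilin (- X) x y = - bilin X x y"
  using assms by (simp add: bilin_sum[of _ n m] sum_negf[symmetric])

lemma bilin_add:
  assumes "X \<in> carrier_mat n m" "Y \<in> carrier_mat n m" "y \<in> carrier_vec m"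
  shows "bilin (X + Y) x y = bilin X x y + bilin Y x y"
  using assms by (simp add: bilin_sum[of _ n m] sum.distrib[symmetric] algebra_simps)

lemma bilin_zero_mat: "y \<in> carrier_vec m \<Longrightarrow> bilin (0\<^sub>m n m) x y = 0"
  by (simp add: bilin_sum[of _ n m])

lemma bilin_mult_right:
  assumes "X \<in> carrier_mat n k" "Y \<in> carrier_mat k m" "y \<in> carrier_vec m"
  shows "bilin (X * Y) x y = bilin X x (Y *\<^sub>v y)"
  using assms by (simp add: bilin_def)

lemma bilin_mult_left:
  assumes "X \<in> carrier_mat n k" "Y \<in> carrier_mat k m" "x \<in> carrier_vec n" "y \<in> carrier_vec m"
  shows "bilin (X * Y) x y = bilin Y (transpose_mat X *\<^sub>v x) y"
  using assms by (simp add: bilin_def transpose_vec_mult_scalar[of X n k _ x])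

lemma bilin_sandwich:
  assumes "P \<in> carrier_mat n m" "M \<in> carrier_mat n n" "x \<in> carrier_vec m" "y \<in> carrier_vec m"
  shows "bilin (transpose_mat P * M * P) x y = bilin M (P *\<^sub>v x) (P *\<^sub>v y)"
proof -
  have "bilin (transpose_mat P * M * P) x y = bilin (transpose_mat P * M) x (P *\<^sub>v y)"
    using assms by (intro bilin_mult_right[of _ m n]) auto
  also have "\<dots> = bilin M (P *\<^sub>v x) (P *\<^sub>v y)"
    using assms by (subst bilin_mult_left[of _ m n _ n]) auto
  finally show ?thesis .
qed

lemma dsum_carrier [simp]:
  "P \<in> carrier_mat n1 m1 \<Longrightarrow> Q \<in> carrier_mat n2 m2 \<Longrightarrow> dsum P Q \<in> carrier_mat (n1 + n2) (m1 + m2)"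
  unfolding dsum_def by auto

lemma dsum_mult_vec:
  assumes "P \<in> carrier_mat n1 m1" "Q \<in> carrier_mat n2 m2" "y1 \<in> carrier_vec m1" "y2 \<in> carrier_vec m2"
  shows "dsum P Q *\<^sub>v (y1 @\<^sub>v y2) = (P *\<^sub>v y1) @\<^sub>v (Q *\<^sub>v y2)"
proof -
  have "(0\<^sub>m n1 m2 *\<^sub>v y2) = 0\<^sub>v n1" "(0\<^sub>m n2 m1 *\<^sub>v y1) = 0\<^sub>v n2"
    using assms by auto
  then show ?thesis
    using assms four_block_mat_mult_vec[of P n1 m1 "0\<^sub>m n1 m2" m2 "0\<^sub>m n2 m1" n2 Q y1 y2]
    by (auto simp: dsum_def)
qed

lemma bilin_dsum:
  assumes "P \<in> carrier_mat n1 m1" "Q \<in> carrier_mat n2 m2"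
    and "x1 \<in> carrier_vec n1" "x2 \<in> carrier_vec n2" "y1 \<in> carrier_vec m1" "y2 \<in> carrier_vec m2"
  shows "bilin (dsum P Q) (x1 @\<^sub>v x2) (y1 @\<^sub>v y2) = bilin P x1 y1 + bilin Q x2 y2"
  using assms by (simp add: bilin_def dsum_mult_vec scalar_prod_append)

lemma sum_lessThan_add: "(\<Sum>k<a+b. f k) = (\<Sum>k<a. f k) + (\<Sum>k<b. f (a+k::nat))"
  by (induction b) (auto simp: add.assoc)

lemma sum_lessThan_pairs: "(\<Sum>i<2*n. f i) = (\<Sum>k<n. f (2*k) + f (2*k+1::nat))"
  by (induction n) (auto simp: algebra_simps)

definition sympl :: "nat \<Rightarrow> real vec \<Rightarrow> real vec \<Rightarrow> real" where
  "sympl n x y = (\<Sum>k<n. x$(2*k) * y$(2*k+1) - x$(2*k+1) * y$(2*k))"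

lemma sympl_antisym: "sympl n x y = - sympl n y x"
  unfolding sympl_def by (simp add: sum_negf[symmetric] mult.commute)

lemma sympl_self [simp]: "sympl n x x = 0"
  using sympl_antisym[of n x x] by linarith

lemma sympl_append:
  assumes "x \<in> carrier_vec (2*a)" "x' \<in> carrier_vec (2*a)" "y \<in> carrier_vec (2*b)" "y' \<in> carrier_vec (2*b)"
  shows "sympl (a+b) (x @\<^sub>v y) (x' @\<^sub>v y') = sympl a x x' + sympl b y y'"
  using assms by (simp add: sympl_def sum_lessThan_add)

lemma omega_carrier [simp]: "omega n \<in> carrier_mat (2*n) (2*n)"
  and dim_omega [simp]: "dim_row (omega n) = 2*n" "dim_col (omega n) = 2*n"
  unfolding omega_def by auto

lemma omega_mult_vec:
  assumes "z \<in> carrier_vec (2*n)"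
  shows "omega n *\<^sub>v z = vec (2*n) (\<lambda>i. if even i then z$(i+1) else - z$(i-1))"
proof (rule eq_vecI)
  fix i assume "i < dim_vec (vec (2*n) (\<lambda>i. if even i then z$(i+1) else - z$(i-1)))"
  then have i: "i < 2*n" by simp
  define p where "p = (if even i then i+1 else i-1)"
  have p: "p < 2*n" using i unfolding p_def by presburger
  have "(omega n *\<^sub>v z) $ i = (\<Sum>j<2*n. omega n $$ (i,j) * z$j)"
    using i assms by (simp add: scalar_prod_def atLeast0LessThan)
  also have "\<dots> = (\<Sum>j<2*n. if j = p then (if even i then z$j else - z$j) else 0)"
    using i by (intro sum.cong) (auto simp: omega_def p_def)
  also have "\<dots> = (if even i then z$(i+1) else - z$(i-1))"
    using p by (simp add: p_def)
  finally show "(omega n *\<^sub>v z) $ i = vec (2*n) (\<lambda>i. if even i then z$(i+1) else - z$(i-1)) $ i"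
    using i by simp
qed simp

lemma omega_transpose_mult_vec:
  assumes "z \<in> carrier_vec (2*n)"
  shows "transpose_mat (omega n) *\<^sub>v z = vec (2*n) (\<lambda>i. if even i then - z$(i+1) else z$(i-1))"
proof (rule eq_vecI)
  fix i assume "i < dim_vec (vec (2*n) (\<lambda>i. if even i then - z$(i+1) else z$(i-1)))"
  then have i: "i < 2*n" by simp
  define p where "p = (if even i then i+1 else i-1)"
  have p: "p < 2*n" using i unfolding p_def by presburger
  have "(transpose_mat (omega n) *\<^sub>v z) $ i = (\<Sum>j<2*n. omega n $$ (j,i) * z$j)"
    using i assms by (simp add: scalar_prod_def atLeast0LessThan)
  also have "\<dots> = (\<Sum>j<2*n. if j = p then (if even i then - z$j else z$j) else 0)"
    using i by (intro sum.cong) (auto simp: omega_def p_def)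
  also have "\<dots> = (if even i then - z$(i+1) else z$(i-1))"
    using p by (simp add: p_def)
  finally show "(transpose_mat (omega n) *\<^sub>v z) $ i = vec (2*n) (\<lambda>i. if even i then - z$(i+1) else z$(i-1)) $ i"
    using i by simp
qed simp

lemma bilin_omega:
  assumes "y \<in> carrier_vec (2*n)"
  shows "bilin (omega n) x y = sympl n x y"
proof -
  have "bilin (omega n) x y = (\<Sum>i<2*n. x$i * (if even i then y$(i+1) else - y$(i-1)))"
    using assms by (simp add: bilin_def omega_mult_vec scalar_prod_def atLeast0LessThan)
  also have "\<dots> = sympl n x y"
    unfolding sum_lessThan_pairs sympl_def by (simp add: algebra_simps)
  finally show ?thesis .
qed

lemma omega_transpose_omega_mult_vec:
  assumes z: "z \<in> carrier_vec (2*n)"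
  shows "transpose_mat (omega n) *\<^sub>v (omega n *\<^sub>v z) = z"
proof (rule eq_vecI)
  have "omega n *\<^sub>v z \<in> carrier_vec (2*n)" using z by (rule mult_mat_vec_carrier[OF omega_carrier])
  note outer = omega_transpose_mult_vec[OF this]
  fix i assume "i < dim_vec z"
  then have i: "i < 2*n" using z by simp
  show "(transpose_mat (omega n) *\<^sub>v (omega n *\<^sub>v z)) $ i = z $ i"
  proof (cases "even i")
    case True
    then have "i + 1 < 2*n" using i by presburger
    with True i show ?thesis unfolding outer by (simp add: omega_mult_vec[OF z])
  next
    case False
    then have "i - 1 + 1 = i" "even (i - 1)" "i - 1 < 2*n" using i by presburger+
    with False i show ?thesis unfolding outer by (simp add: omega_mult_vec[OF z])
  qed
qed (use z in simp)

lemma omega_omega_transpose_mult_vec: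
  assumes z: "z \<in> carrier_vec (2*n)"
  shows "omega n *\<^sub>v (transpose_mat (omega n) *\<^sub>v z) = z"
proof (rule eq_vecI)
  have "transpose_mat (omega n) \<in> carrier_mat (2*n) (2*n)" by simp
  then have "transpose_mat (omega n) *\<^sub>v z \<in> carrier_vec (2*n)"
    using z by (rule mult_mat_vec_carrier)
  note outer = omega_mult_vec[OF this]
  fix i assume "i < dim_vec z"
  then have i: "i < 2*n" using z by simp
  show "(omega n *\<^sub>v (transpose_mat (omega n) *\<^sub>v z)) $ i = z $ i"
  proof (cases "even i")
    case True
    then have "i + 1 < 2*n" using i by presburger
    with True i show ?thesis unfolding outer by (simp add: omega_transpose_mult_vec[OF z])
  next
    case False
    then have "i - 1 + 1 = i" "even (i - 1)" "i - 1 < 2*n" using i by presburger+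
    with False i show ?thesis unfolding outer by (simp add: omega_transpose_mult_vec[OF z])
  qed
qed (use z in simp)

lemma sympl_omega:
  assumes "x \<in> carrier_vec (2*n)" "y \<in> carrier_vec (2*n)"
  shows "sympl n (omega n *\<^sub>v x) (omega n *\<^sub>v y) = sympl n x y"
  using assms by (auto simp: sympl_def omega_mult_vec intro!: sum.cong)

lemma vec_pairwise_append:
  fixes f g :: "real \<Rightarrow> real"
  assumes x: "x \<in> carrier_vec (2*a)" and y: "y \<in> carrier_vec (2*b)"
  shows "vec (2*(a+b)) (\<lambda>i. if even i then f ((x @\<^sub>v y)$(i+1)) else g ((x @\<^sub>v y)$(i-1)))
    = vec (2*a) (\<lambda>i. if even i then f (x$(i+1)) else g (x$(i-1)))
      @\<^sub>v vec (2*b) (\<lambda>i. if even i then f (y$(i+1)) else g (y$(i-1)))"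
proof (rule eq_vecI)
  fix i assume "i < dim_vec (vec (2*a) (\<lambda>i. if even i then f (x$(i+1)) else g (x$(i-1)))
      @\<^sub>v vec (2*b) (\<lambda>i. if even i then f (y$(i+1)) else g (y$(i-1))))"
  then have i: "i < 2*a + 2*b" by simp
  show "vec (2*(a+b)) (\<lambda>i. if even i then f ((x @\<^sub>v y)$(i+1)) else g ((x @\<^sub>v y)$(i-1))) $ i
    = (vec (2*a) (\<lambda>i. if even i then f (x$(i+1)) else g (x$(i-1)))
      @\<^sub>v vec (2*b) (\<lambda>i. if even i then f (y$(i+1)) else g (y$(i-1)))) $ i"
  proof (cases "i < 2*a")
    case True
    moreover have "even i \<Longrightarrow> i + 1 < 2*a" using True by presburger
    ultimately show ?thesis using x y i by (auto simp: distrib_left)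
  next
    case False
    have "even (i - 2*a) = even i" "i + 1 - 2*a = i - 2*a + 1" using False by presburger+
    moreover have "odd i \<Longrightarrow> i - 1 - 2*a = i - 2*a - 1 \<and> \<not> i - 1 < 2*a" using False by presburger
    moreover have "even i \<Longrightarrow> i + 1 < 2*a + 2*b" using i by presburger
    ultimately show ?thesis using x y i False by (auto simp: distrib_left)
  qed
qed (simp add: distrib_left)

lemma omega_mult_append:
  assumes x: "x \<in> carrier_vec (2*a)" and y: "y \<in> carrier_vec (2*b)"
  shows "omega (a+b) *\<^sub>v (x @\<^sub>v y) = (omega a *\<^sub>v x) @\<^sub>v (omega b *\<^sub>v y)"
proof -
  have "x @\<^sub>v y \<in> carrier_vec (2*(a+b))" using append_carrier_vec[OF x y] by (simp add: distrib_left)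
  then show ?thesis
    using vec_pairwise_append[OF x y, of "\<lambda>t. t" uminus] by (simp add: omega_mult_vec x y)
qed

lemma omega_transpose_mult_append:
  assumes x: "x \<in> carrier_vec (2*a)" and y: "y \<in> carrier_vec (2*b)"
  shows "transpose_mat (omega (a+b)) *\<^sub>v (x @\<^sub>v y)
    = (transpose_mat (omega a) *\<^sub>v x) @\<^sub>v (transpose_mat (omega b) *\<^sub>v y)"
proof -
  have "x @\<^sub>v y \<in> carrier_vec (2*(a+b))" using append_carrier_vec[OF x y] by (simp add: distrib_left)
  then show ?thesis
    using vec_pairwise_append[OF x y, of uminus "\<lambda>t. t"] by (simp add: omega_transpose_mult_vec x y)
qed

lemma quadratic_form_complex:
  fixes X :: "complex mat" and S T :: "real mat" and v :: "complex vec"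
  assumes S: "S \<in> carrier_mat n n" and T: "T \<in> carrier_mat n n"
    and X: "\<And>i j. i < n \<Longrightarrow> j < n \<Longrightarrow> X $$ (i,j) = Complex (S $$ (i,j)) (T $$ (i,j))"
  defines "a \<equiv> vec n (\<lambda>i. Re (v$i))" and "b \<equiv> vec n (\<lambda>i. Im (v$i))"
  shows "(\<Sum>i<n. \<Sum>j<n. cnj (v$i) * X $$ (i,j) * v$j) =
    Complex (bilin S a a + bilin S b b - bilin T a b + bilin T b a)
            (bilin T a a + bilin T b b + bilin S a b - bilin S b a)"
  using S T unfolding complex_eq_iff
  by (simp add: bilin_sum[OF S] bilin_sum[OF T] Re_sum Im_sum X a_def b_def
      sum.distrib[symmetric] sum_subtractf[symmetric] algebra_simps)

lemma psd_iff_bilin: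
  fixes X :: "complex mat" and S T :: "real mat"
  assumes X: "X \<in> carrier_mat n n" and S: "S \<in> carrier_mat n n" and T: "T \<in> carrier_mat n n"
    and entries: "\<And>i j. i < n \<Longrightarrow> j < n \<Longrightarrow> X $$ (i,j) = Complex (S $$ (i,j)) (T $$ (i,j))"
  shows "psd X \<longleftrightarrow> (\<forall>a\<in>carrier_vec n. \<forall>b\<in>carrier_vec n.
    bilin T a a + bilin T b b + bilin S a b - bilin S b a = 0 \<and>
    0 \<le> bilin S a a + bilin S b b - bilin T a b + bilin T b a)" (is "_ \<longleftrightarrow> ?rhs")
proof -
  note form = quadratic_form_complex[OF S T entries]
  have "psd X \<longleftrightarrow> (\<forall>v\<in>carrier_vec n.
      let q = (\<Sum>i<n. \<Sum>j<n. cnj (v$i) * X $$ (i,j) * v$j) in Im q = 0 \<and> Re q \<ge> 0)"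
    using X by (auto simp: psd_def)
  also have "\<dots> \<longleftrightarrow> ?rhs"
  proof (intro iffI ballI)
    fix a b :: "real vec" assume a: "a \<in> carrier_vec n" and b: "b \<in> carrier_vec n"
    define v where "v = vec n (\<lambda>i. Complex (a$i) (b$i))"
    have v: "v \<in> carrier_vec n" by (simp add: v_def)
    have "vec n (\<lambda>i. Re (v$i)) = a" "vec n (\<lambda>i. Im (v$i)) = b"
      using a b by (auto simp: v_def)
    moreover assume "\<forall>v\<in>carrier_vec n.
      let q = (\<Sum>i<n. \<Sum>j<n. cnj (v$i) * X $$ (i,j) * v$j) in Im q = 0 \<and> Re q \<ge> 0"
    note bspec[OF this v]
    ultimately show "bilin T a a + bilin T b b + bilin S a b - bilin S b a = 0 \<and>
        0 \<le> bilin S a a + bilin S b b - bilin T a b + bilin T b a"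
      by (simp add: form Let_def)
  next
    fix v :: "complex vec" assume "v \<in> carrier_vec n"
    assume "\<forall>a\<in>carrier_vec n. \<forall>b\<in>carrier_vec n.
      bilin T a a + bilin T b b + bilin S a b - bilin S b a = 0 \<and>
      0 \<le> bilin S a a + bilin S b b - bilin T a b + bilin T b a"
    then show "let q = (\<Sum>i<n. \<Sum>j<n. cnj (v$i) * X $$ (i,j) * v$j) in Im q = 0 \<and> Re q \<ge> 0"
      by (simp add: form Let_def)
  qed
  finally show ?thesis .
qed

lemma psd_iff_bilin_antisym:
  fixes X :: "complex mat" and S T :: "real mat"
  assumes X: "X \<in> carrier_mat n n" and S: "S \<in> carrier_mat n n" and T: "T \<in> carrier_mat n n"
    and entries: "\<And>i j. i < n \<Longrightarrow> j < n \<Longrightarrow> X $$ (i,j) = Complex (S $$ (i,j)) (T $$ (i,j))"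
    and antisym: "\<And>a b. a \<in> carrier_vec n \<Longrightarrow> b \<in> carrier_vec n \<Longrightarrow> bilin T a b = - bilin T b a"
  shows "psd X \<longleftrightarrow> (\<forall>a\<in>carrier_vec n. \<forall>b\<in>carrier_vec n.
    bilin S a b = bilin S b a \<and> 2 * bilin T a b \<le> bilin S a a + bilin S b b)"
proof -
  have pointwise: "bilin T a a + bilin T b b + bilin S a b - bilin S b a = 0 \<and>
      0 \<le> bilin S a a + bilin S b b - bilin T a b + bilin T b a
    \<longleftrightarrow> bilin S a b = bilin S b a \<and> 2 * bilin T a b \<le> bilin S a a + bilin S b b"
    if "a \<in> carrier_vec n" "b \<in> carrier_vec n" for a b
    using antisym[OF that] antisym[OF that(1,1)] antisym[OF that(2,2)] by auto
  have "psd X \<longleftrightarrow> (\<forall>a\<in>carrier_vec n. \<forall>b\<in>carrier_vec n.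
      bilin T a a + bilin T b b + bilin S a b - bilin S b a = 0 \<and>
      0 \<le> bilin S a a + bilin S b b - bilin T a b + bilin T b a)"
    by (rule psd_iff_bilin[OF X S T entries])
  also have "\<dots> \<longleftrightarrow> (\<forall>a\<in>carrier_vec n. \<forall>b\<in>carrier_vec n.
      bilin S a b = bilin S b a \<and> 2 * bilin T a b \<le> bilin S a a + bilin S b b)"
    by (intro ball_cong refl pointwise)
  finally show ?thesis .
qed

lemma ball_carrier_vec_append:
  "(\<forall>x\<in>carrier_vec (n1 + n2). P x) \<longleftrightarrow> (\<forall>x1\<in>carrier_vec n1. \<forall>x2\<in>carrier_vec n2. P (x1 @\<^sub>v x2))"
  by (metis append_carrier_vec vec_first_carrier vec_first_last_append vec_last_carrier)

lemma gaussian_cov_iff: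
  "gaussian_cov n V \<longleftrightarrow> V \<in> carrier_mat (2*n) (2*n) \<and>
    (\<forall>a\<in>carrier_vec (2*n). \<forall>b\<in>carrier_vec (2*n).
      bilin V a b = bilin V b a \<and> 2 * sympl n a b \<le> bilin V a a + bilin V b b)"
proof (cases "V \<in> carrier_mat (2*n) (2*n)")
  case True
  have "psd (cmat V + \<i> \<cdot>\<^sub>m cmat (omega n)) \<longleftrightarrow> (\<forall>a\<in>carrier_vec (2*n). \<forall>b\<in>carrier_vec (2*n).
      bilin V a b = bilin V b a \<and> 2 * bilin (omega n) a b \<le> bilin V a a + bilin V b b)"
    using True by (intro psd_iff_bilin_antisym)
      (auto simp: cmat_def complex_eq_iff bilin_omega intro: sympl_antisym)
  with True show ?thesis by (simp add: gaussian_cov_def bilin_omega)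
qed (simp add: gaussian_cov_def)

lemma gaussian_obs_psd_iff:
  assumes K: "K \<in> carrier_mat (2*n) m" and L: "L \<in> carrier_mat m m"
  shows "psd (cmat L - \<i> \<cdot>\<^sub>m cmat (transpose_mat K * omega n * K)) \<longleftrightarrow>
    (\<forall>g\<in>carrier_vec m. \<forall>h\<in>carrier_vec m.
      bilin L g h = bilin L h g \<and> 2 * sympl n (K *\<^sub>v h) (K *\<^sub>v g) \<le> bilin L g g + bilin L h h)"
proof -
  define W where "W = transpose_mat K * omega n * K"
  have W: "W \<in> carrier_mat m m" unfolding W_def using K by auto
  have bilin_W: "bilin (- W) g h = sympl n (K *\<^sub>v h) (K *\<^sub>v g)"
    if g: "g \<in> carrier_vec m" and h: "h \<in> carrier_vec m" for g h
  proof -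
    have "bilin (- W) g h = - bilin W g h" by (rule bilin_uminus[OF W h])
    also have "bilin W g h = bilin (omega n) (K *\<^sub>v g) (K *\<^sub>v h)"
      unfolding W_def by (rule bilin_sandwich[OF K omega_carrier g h])
    also have "- \<dots> = sympl n (K *\<^sub>v h) (K *\<^sub>v g)"
      using bilin_omega[OF mult_mat_vec_carrier[OF K h]] sympl_antisym[of n "K *\<^sub>v g" "K *\<^sub>v h"] by simp
    finally show ?thesis .
  qed
  have "psd (cmat L - \<i> \<cdot>\<^sub>m cmat W) \<longleftrightarrow> (\<forall>g\<in>carrier_vec m. \<forall>h\<in>carrier_vec m.
      bilin L g h = bilin L h g \<and> 2 * bilin (- W) g h \<le> bilin L g g + bilin L h h)"
    using L W by (intro psd_iff_bilin_antisym)
      (auto simp: cmat_def complex_eq_iff bilin_W intro: sympl_antisym)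
  then show ?thesis by (simp add: W_def[symmetric] bilin_W)
qed

lemma psd_cmat_iff:
  assumes L: "L \<in> carrier_mat m m"
  shows "psd (cmat L) \<longleftrightarrow>
    (\<forall>g\<in>carrier_vec m. \<forall>h\<in>carrier_vec m. bilin L g h = bilin L h g) \<and> (\<forall>g\<in>carrier_vec m. 0 \<le> bilin L g g)"
proof -
  have "psd (cmat L) \<longleftrightarrow> (\<forall>g\<in>carrier_vec m. \<forall>h\<in>carrier_vec m.
      bilin L g h = bilin L h g \<and> 2 * bilin (0\<^sub>m m m) g h \<le> bilin L g g + bilin L h h)"
    using L by (intro psd_iff_bilin_antisym) (auto simp: cmat_def complex_eq_iff bilin_zero_mat)
  also have "\<dots> \<longleftrightarrow>
    (\<forall>g\<in>carrier_vec m. \<forall>h\<in>carrier_vec m. bilin L g h = bilin L h g) \<and> (\<forall>g\<in>carrier_vec m. 0 \<le> bilin L g g)"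
  proof (intro iffI conjI ballI)
    fix g :: "real vec" assume g: "g \<in> carrier_vec m" and "\<forall>g\<in>carrier_vec m. \<forall>h\<in>carrier_vec m.
      bilin L g h = bilin L h g \<and> 2 * bilin (0\<^sub>m m m) g h \<le> bilin L g g + bilin L h h"
    from this(2)[rule_format, OF g g] show "0 \<le> bilin L g g"
      using g by (simp add: bilin_zero_mat)
  qed (auto simp: bilin_zero_mat intro: add_nonneg_nonneg)
  finally show ?thesis .
qed

lemma non_steerable_iff:
  assumes V: "V \<in> carrier_mat (2*nA + 2*nB) (2*nA + 2*nB)"
  shows "non_steerable nA nB V \<longleftrightarrow>
    (\<forall>xA\<in>carrier_vec (2*nA). \<forall>xB\<in>carrier_vec (2*nB). \<forall>yA\<in>carrier_vec (2*nA). \<forall>yB\<in>carrier_vec (2*nB).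
      bilin V (xA @\<^sub>v xB) (yA @\<^sub>v yB) = bilin V (yA @\<^sub>v yB) (xA @\<^sub>v xB) \<and>
      2 * sympl nB xB yB \<le> bilin V (xA @\<^sub>v xB) (xA @\<^sub>v xB) + bilin V (yA @\<^sub>v yB) (yA @\<^sub>v yB))"
proof -
  define T where "T = dsum (0\<^sub>m (2*nA) (2*nA)) (omega nB)"
  have T: "T \<in> carrier_mat (2*nA + 2*nB) (2*nA + 2*nB)" by (simp add: T_def)
  have bilin_T: "bilin T (xA @\<^sub>v xB) (yA @\<^sub>v yB) = sympl nB xB yB"
    if "xA \<in> carrier_vec (2*nA)" "xB \<in> carrier_vec (2*nB)" "yA \<in> carrier_vec (2*nA)" "yB \<in> carrier_vec (2*nB)"
    for xA xB yA yB
    using that by (simp add: T_def bilin_dsum[OF zero_carrier_mat omega_carrier] bilin_zero_mat bilin_omega)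
  have "non_steerable nA nB V \<longleftrightarrow> (\<forall>x\<in>carrier_vec (2*nA + 2*nB). \<forall>y\<in>carrier_vec (2*nA + 2*nB).
      bilin V x y = bilin V y x \<and> 2 * bilin T x y \<le> bilin V x x + bilin V y y)"
    unfolding non_steerable_def T_def[symmetric]
  proof (rule psd_iff_bilin_antisym[OF _ V T])
    have "\<forall>x\<in>carrier_vec (2*nA + 2*nB). \<forall>y\<in>carrier_vec (2*nA + 2*nB). bilin T x y = - bilin T y x"
      unfolding ball_carrier_vec_append by (auto simp: bilin_T intro: sympl_antisym)
    then show "bilin T x y = - bilin T y x"
      if "x \<in> carrier_vec (2*nA + 2*nB)" "y \<in> carrier_vec (2*nA + 2*nB)" for x y
      using that by blast
  qed (use V T in \<open>auto simp: cmat_def complex_eq_iff\<close>)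
  then show ?thesis
    unfolding ball_carrier_vec_append by (simp add: bilin_T)
qed

lemma gaussian_channel_noise_symmetric:
  assumes "gaussian_channel N N' A B c" "a \<in> carrier_vec (2*N')" "b \<in> carrier_vec (2*N')"
  shows "bilin B a b = bilin B b a"
proof -
  have A: "A \<in> carrier_mat (2*N) (2*N')" and B: "B \<in> carrier_mat (2*N') (2*N')"
    and psd: "psd (cmat B + \<i> \<cdot>\<^sub>m cmat (omega N') - \<i> \<cdot>\<^sub>m cmat (transpose_mat A * omega N * A))"
    using assms(1) by (auto simp: gaussian_channel_def)
  define T where "T = omega N' - transpose_mat A * omega N * A"
  have T: "T \<in> carrier_mat (2*N') (2*N')" unfolding T_def using A by auto
  have bilin_T: "bilin T x y = sympl N' x y - sympl N (A *\<^sub>v x) (A *\<^sub>v y)"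
    if "x \<in> carrier_vec (2*N')" "y \<in> carrier_vec (2*N')" for x y
    using that A unfolding T_def
    by (subst bilin_diff[of _ "2*N'" "2*N'"]) (auto simp: bilin_sandwich[OF A] bilin_omega)
  have "psd (cmat B + \<i> \<cdot>\<^sub>m cmat (omega N') - \<i> \<cdot>\<^sub>m cmat (transpose_mat A * omega N * A)) \<longleftrightarrow>
      (\<forall>x\<in>carrier_vec (2*N'). \<forall>y\<in>carrier_vec (2*N').
        bilin B x y = bilin B y x \<and> 2 * bilin T x y \<le> bilin B x x + bilin B y y)"
    using A B T
  proof (intro psd_iff_bilin_antisym)
    fix x y :: "real vec" assume "x \<in> carrier_vec (2*N')" "y \<in> carrier_vec (2*N')"
    then show "bilin T x y = - bilin T y x"
      using sympl_antisym[of N' x y] sympl_antisym[of N "A *\<^sub>v x" "A *\<^sub>v y"] by (simp add: bilin_T)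
  qed (auto simp: cmat_def complex_eq_iff T_def)
  with psd assms(2,3) show ?thesis by blast
qed

definition noise_dominates :: "nat \<Rightarrow> real mat \<Rightarrow> real mat \<Rightarrow> bool" where
  "noise_dominates N A B \<longleftrightarrow> psd (cmat B - \<i> \<cdot>\<^sub>m cmat (transpose_mat A * omega N * A))"

lemma noise_dominates_iff:
  assumes "A \<in> carrier_mat (2*N) (2*N')" "B \<in> carrier_mat (2*N') (2*N')"
  shows "noise_dominates N A B \<longleftrightarrow> (\<forall>a\<in>carrier_vec (2*N'). \<forall>b\<in>carrier_vec (2*N').
    bilin B a b = bilin B b a \<and> 2 * sympl N (A *\<^sub>v b) (A *\<^sub>v a) \<le> bilin B a a + bilin B b b)"
  unfolding noise_dominates_def by (rule gaussian_obs_psd_iff[OF assms])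

lemma gaussian_obs_noise_psd:
  assumes "gaussian_obs n (K, L, m)"
  shows "psd (cmat L)"
proof -
  have K: "K \<in> carrier_mat (2*n) (dim_col K)" and L: "L \<in> carrier_mat (dim_col K) (dim_col K)"
    and psd: "psd (cmat L - \<i> \<cdot>\<^sub>m cmat (transpose_mat K * omega n * K))"
    using assms by (auto simp: gaussian_obs_def Let_def)
  note form = psd[unfolded gaussian_obs_psd_iff[OF K L]]
  have "0 \<le> bilin L g g" if g: "g \<in> carrier_vec (dim_col K)" for g
    using form[rule_format, OF g g] by simp
  with form show ?thesis by (simp add: psd_cmat_iff[OF L])
qed

lemma channel_obs_eq_postprocess:
  assumes "A \<in> carrier_mat (2*N) (2*N')" "B \<in> carrier_mat (2*N') (2*N')" "c \<in> carrier_vec (2*N')"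
    and "K \<in> carrier_mat (2*N') M" "L \<in> carrier_mat M M" "m \<in> carrier_vec M"
  shows "channel_obs A B c (K, L, m) = postprocess (A, B, 0\<^sub>v (2*N')) (K, L, m + transpose_mat K *\<^sub>v c)"
  using assms by (auto simp: channel_obs_def postprocess_def comm_add_mat[of L M M])

lemma noise_dominates_imp_incompatibility_breaking:
  assumes ch: "gaussian_channel N N' A B c" and "N' \<ge> 1" and "noise_dominates N A B"
  shows "gaussian_incompatibility_breaking N N' A B c"
proof -
  have A: "A \<in> carrier_mat (2*N) (2*N')" and B: "B \<in> carrier_mat (2*N') (2*N')"
    and c: "c \<in> carrier_vec (2*N')"
    using ch by (auto simp: gaussian_channel_def)
  define G :: gobs where "G = (A, B, 0\<^sub>v (2*N'))"
  have "gaussian_obs N G"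
    using A B assms(2,3) by (auto simp: G_def gaussian_obs_def noise_dominates_def)
  moreover have "\<exists>f. gaussian_postproc (outdim G) (outdim E) f \<and> obtained_via E G f"
    if "E \<in> channel_obs A B c ` {E. gaussian_obs N' E}" for E
  proof -
    from that obtain K L m where obs: "gaussian_obs N' (K, L, m)" and E: "E = channel_obs A B c (K, L, m)"
      by auto
    define M where "M = dim_col K"
    have K: "K \<in> carrier_mat (2*N') M" and L: "L \<in> carrier_mat M M" and m: "m \<in> carrier_vec M"
      using obs by (auto simp: gaussian_obs_def M_def Let_def)
    have "outdim G = 2*N'" "outdim E = M"
      using A by (simp_all add: outdim_def G_def E channel_obs_def M_def)
    moreover have "m + transpose_mat K *\<^sub>v c \<in> carrier_vec M" using K m c by auto
    ultimately have "gaussian_postproc (outdim G) (outdim E) (K, L, m + transpose_mat K *\<^sub>v c)"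
      using K L gaussian_obs_noise_psd[OF obs] by (simp add: gaussian_postproc_def)
    moreover have "obtained_via E G (K, L, m + transpose_mat K *\<^sub>v c)"
      unfolding obtained_via_def E G_def by (rule channel_obs_eq_postprocess[OF A B c K L m])
    ultimately show ?thesis by blast
  qed
  ultimately show ?thesis
    unfolding gaussian_incompatibility_breaking_def gaussian_compatible_def by blast
qed

lemma sympl_smult:
  assumes "a \<in> carrier_vec (2*n)" "b \<in> carrier_vec (2*n)"
  shows "sympl n (s \<cdot>\<^sub>v a) (t \<cdot>\<^sub>v b) = s * t * sympl n a b"
proof -
  have "2*k < 2*n" "2*k+1 < 2*n" if "k < n" for k using that by auto
  then show ?thesis
    using assms by (auto simp: sympl_def sum_distrib_left algebra_simps intro!: sum.cong)
qed

lemma mat_of_cols_single_mult_vec: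
  fixes a v :: "'a :: comm_ring vec"
  assumes "a \<in> carrier_vec n" "v \<in> carrier_vec 1"
  shows "mat_of_cols n [a] *\<^sub>v v = v$0 \<cdot>\<^sub>v a"
  using assms by (intro eq_vecI) (auto simp: mat_of_cols_def scalar_prod_def mult.commute)

lemma gaussian_obs_rank_one:
  assumes a: "a \<in> carrier_vec (2*n)"
  shows "gaussian_obs n (mat_of_cols (2*n) [a], 0\<^sub>m 1 1, 0\<^sub>v 1)"
proof -
  have "psd (cmat (0\<^sub>m 1 1) - \<i> \<cdot>\<^sub>m cmat (transpose_mat (mat_of_cols (2*n) [a]) * omega n * mat_of_cols (2*n) [a]))"
    using a by (subst gaussian_obs_psd_iff[of _ n 1])
      (auto simp: bilin_zero_mat mat_of_cols_single_mult_vec sympl_smult)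
  then show ?thesis using mat_of_cols_carrier(1)[of "2*n" "[a]"] by (simp add: gaussian_obs_def)
qed

lemma obtained_via_noise_bound:
  assumes "obtained_via (K, L, m) (KG, LG, mG) (A', B', c')"
    and KG: "KG \<in> carrier_mat n MG" and LG: "LG \<in> carrier_mat MG MG"
    and A': "A' \<in> carrier_mat MG M" and B': "B' \<in> carrier_mat M M" "psd (cmat B')"
    and v: "v \<in> carrier_vec M"
  shows "K *\<^sub>v v = KG *\<^sub>v (A' *\<^sub>v v)" and "bilin LG (A' *\<^sub>v v) (A' *\<^sub>v v) \<le> bilin L v v"
proof -
  have K: "K = KG * A'" and L: "L = transpose_mat A' * LG * A' + B'"
    using assms(1) by (auto simp: obtained_via_def postprocess_def)
  show "K *\<^sub>v v = KG *\<^sub>v (A' *\<^sub>v v)" unfolding K using KG A' v by simp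
  have "transpose_mat A' * LG * A' \<in> carrier_mat M M" using A' LG by auto
  then have "bilin L v v = bilin LG (A' *\<^sub>v v) (A' *\<^sub>v v) + bilin B' v v"
    unfolding L using bilin_add[OF _ B'(1) v] bilin_sandwich[OF A' LG v v] by simp
  moreover have "0 \<le> bilin B' v v" using B' v by (simp add: psd_cmat_iff)
  ultimately show "bilin LG (A' *\<^sub>v v) (A' *\<^sub>v v) \<le> bilin L v v" by simp
qed

lemma rank_one_channel_obs_lift:
  assumes A: "A \<in> carrier_mat (2*N) (2*N')" and B: "B \<in> carrier_mat (2*N') (2*N')"
    and KG: "KG \<in> carrier_mat (2*N) MG" and LG: "LG \<in> carrier_mat MG MG"
    and a: "a \<in> carrier_vec (2*N')" and pp: "gaussian_postproc MG 1 (A', B', c')"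
    and ov: "obtained_via (channel_obs A B c (mat_of_cols (2*N') [a], 0\<^sub>m 1 1, 0\<^sub>v 1)) (KG, LG, mG) (A', B', c')"
  shows "\<exists>g\<in>carrier_vec MG. A *\<^sub>v a = KG *\<^sub>v g \<and> bilin LG g g \<le> bilin B a a"
proof -
  define C where "C = mat_of_cols (2*N') [a]"
  have C: "C \<in> carrier_mat (2*N') 1" using mat_of_cols_carrier(1)[of "2*N'" "[a]"] by (simp add: C_def)
  have A': "A' \<in> carrier_mat MG 1" and B': "B' \<in> carrier_mat 1 1" "psd (cmat B')"
    using pp by (auto simp: gaussian_postproc_def)
  have ov': "obtained_via (A * C, 0\<^sub>m 1 1 + transpose_mat C * B * C, 0\<^sub>v 1 + transpose_mat C *\<^sub>v c)
      (KG, LG, mG) (A', B', c')"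
    using ov by (simp add: C_def channel_obs_def)
  define e :: "real vec" where "e = unit_vec 1 0"
  have e: "e \<in> carrier_vec 1" and Ce: "C *\<^sub>v e = a"
    using a by (simp_all add: e_def C_def mat_of_cols_single_mult_vec)
  have "(A * C) *\<^sub>v e = A *\<^sub>v a" using A C e Ce by simp
  moreover have "bilin (0\<^sub>m 1 1 + transpose_mat C * B * C) e e = bilin B a a"
  proof -
    have "transpose_mat C * B * C \<in> carrier_mat 1 1" using B C by auto
    then show ?thesis
      using bilin_add[OF zero_carrier_mat _ e] bilin_zero_mat[OF e] bilin_sandwich[OF C B e e] Ce by simp
  qed
  ultimately show ?thesis
    using obtained_via_noise_bound[OF ov' KG LG A' B' e] mult_mat_vec_carrier[OF A' e]
    by (intro bexI[of _ "A' *\<^sub>v e"]) auto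
qed

lemma incompatibility_breaking_imp_noise_dominates:
  assumes ch: "gaussian_channel N N' A B c" and "gaussian_incompatibility_breaking N N' A B c"
  shows "noise_dominates N A B"
proof -
  have A: "A \<in> carrier_mat (2*N) (2*N')" and B: "B \<in> carrier_mat (2*N') (2*N')"
    using ch by (auto simp: gaussian_channel_def)
  obtain KG LG mG where G: "gaussian_obs N (KG, LG, mG)" and parent:
    "\<forall>E\<in>channel_obs A B c ` {E. gaussian_obs N' E}.
       \<exists>f. gaussian_postproc (dim_col KG) (outdim E) f \<and> obtained_via E (KG, LG, mG) f"
    using assms(2) unfolding gaussian_incompatibility_breaking_def gaussian_compatible_def outdim_def
    by (metis fst_conv prod_cases3)
  define MG where "MG = dim_col KG"
  have KG: "KG \<in> carrier_mat (2*N) MG" and LG: "LG \<in> carrier_mat MG MG"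
    and psd_G: "psd (cmat LG - \<i> \<cdot>\<^sub>m cmat (transpose_mat KG * omega N * KG))"
    using G by (auto simp: gaussian_obs_def MG_def Let_def)
  have lift: "\<exists>g\<in>carrier_vec MG. A *\<^sub>v a = KG *\<^sub>v g \<and> bilin LG g g \<le> bilin B a a"
    if a: "a \<in> carrier_vec (2*N')" for a
  proof -
    let ?E = "channel_obs A B c (mat_of_cols (2*N') [a], 0\<^sub>m 1 1, 0\<^sub>v 1)"
    have "?E \<in> channel_obs A B c ` {E. gaussian_obs N' E}" using gaussian_obs_rank_one[OF a] by blast
    moreover have "outdim ?E = 1" by (simp add: outdim_def channel_obs_def)
    ultimately obtain A' B' c' where "gaussian_postproc MG 1 (A', B', c')" "obtained_via ?E (KG, LG, mG) (A', B', c')"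
      using parent unfolding MG_def by (metis prod_cases3)
    then show ?thesis by (rule rank_one_channel_obs_lift[OF A B KG LG a])
  qed
  show ?thesis unfolding noise_dominates_iff[OF A B]
  proof (intro ballI conjI)
    fix a b :: "real vec" assume a: "a \<in> carrier_vec (2*N')" and b: "b \<in> carrier_vec (2*N')"
    show "bilin B a b = bilin B b a" by (rule gaussian_channel_noise_symmetric[OF ch a b])
    obtain g where g: "g \<in> carrier_vec MG" "A *\<^sub>v a = KG *\<^sub>v g" "bilin LG g g \<le> bilin B a a"
      using lift[OF a] by blast
    obtain h where h: "h \<in> carrier_vec MG" "A *\<^sub>v b = KG *\<^sub>v h" "bilin LG h h \<le> bilin B b b"
      using lift[OF b] by blast
    have "2 * sympl N (KG *\<^sub>v h) (KG *\<^sub>v g) \<le> bilin LG g g + bilin LG h h"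
      using psd_G g(1) h(1) by (simp add: gaussian_obs_psd_iff[OF KG LG])
    with g h show "2 * sympl N (A *\<^sub>v b) (A *\<^sub>v a) \<le> bilin B a a + bilin B b b" by simp
  qed
qed

lemma omega_mult_vec_carrier [simp]:
  "omega n *\<^sub>v z \<in> carrier_vec (2*n)" "transpose_mat (omega n) *\<^sub>v z \<in> carrier_vec (2*n)"
  by (intro carrier_vecI; simp)+

lemma omega_add_carrier: "omega (a+b) \<in> carrier_mat (2*a + 2*b) (2*a + 2*b)"
  using omega_carrier[of "a+b"] by (simp add: distrib_left)

definition channel_transfer :: "nat \<Rightarrow> nat \<Rightarrow> nat \<Rightarrow> real mat \<Rightarrow> real mat" where
  "channel_transfer N N' M A = omega (N+M) * dsum A (1\<^sub>m (2*M)) * transpose_mat (omega (N'+M))"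

lemma channel_transfer_carrier:
  "A \<in> carrier_mat (2*N) (2*N') \<Longrightarrow> channel_transfer N N' M A \<in> carrier_mat (2*N + 2*M) (2*N' + 2*M)"
  unfolding channel_transfer_def using omega_add_carrier[of N M] omega_add_carrier[of N' M]
  by (intro mult_carrier_mat) auto

lemma channel_transfer_mult_append:
  assumes A: "A \<in> carrier_mat (2*N) (2*N')" and z1: "z1 \<in> carrier_vec (2*N')" and z2: "z2 \<in> carrier_vec (2*M)"
  shows "channel_transfer N N' M A *\<^sub>v (z1 @\<^sub>v z2)
    = (omega N *\<^sub>v (A *\<^sub>v (transpose_mat (omega N') *\<^sub>v z1))) @\<^sub>v z2"
proof -
  define D where "D = dsum A (1\<^sub>m (2*M))"
  have Oi: "omega (N+M) \<in> carrier_mat (2*N + 2*M) (2*N + 2*M)" by (rule omega_add_carrier)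
  have OoT: "transpose_mat (omega (N'+M)) \<in> carrier_mat (2*N' + 2*M) (2*N' + 2*M)"
    using omega_add_carrier by simp
  have D: "D \<in> carrier_mat (2*N + 2*M) (2*N' + 2*M)" using A by (simp add: D_def)
  have z: "z1 @\<^sub>v z2 \<in> carrier_vec (2*N' + 2*M)" using z1 z2 by simp
  have "channel_transfer N N' M A *\<^sub>v (z1 @\<^sub>v z2)
      = (omega (N+M) * D) *\<^sub>v (transpose_mat (omega (N'+M)) *\<^sub>v (z1 @\<^sub>v z2))"
    unfolding channel_transfer_def D_def[symmetric]
    by (rule assoc_mult_mat_vec[OF mult_carrier_mat[OF Oi D] OoT z])
  also have "\<dots> = omega (N+M) *\<^sub>v (D *\<^sub>v (transpose_mat (omega (N'+M)) *\<^sub>v (z1 @\<^sub>v z2)))"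
    using OoT z by (intro assoc_mult_mat_vec[OF Oi D]) simp
  also have "\<dots> = omega (N+M) *\<^sub>v ((A *\<^sub>v (transpose_mat (omega N') *\<^sub>v z1)) @\<^sub>v (transpose_mat (omega M) *\<^sub>v z2))"
    using z1 z2 by (simp add: omega_transpose_mult_append D_def dsum_mult_vec[OF A one_carrier_mat])
  also have "\<dots> = (omega N *\<^sub>v (A *\<^sub>v (transpose_mat (omega N') *\<^sub>v z1))) @\<^sub>v z2"
    using A z1 z2 by (simp add: omega_mult_append omega_omega_transpose_mult_vec)
  finally show ?thesis .
qed

lemma channel_cov_sandwich:
  assumes A: "A \<in> carrier_mat (2*N) (2*N')" and V0: "V0 \<in> carrier_mat (2*N + 2*M) (2*N + 2*M)"
  shows "channel_cov N N' M A B V0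
    = transpose_mat (channel_transfer N N' M A) * V0 * channel_transfer N N' M A
      + transpose_mat (transpose_mat (omega (N'+M))) * dsum B (0\<^sub>m (2*M) (2*M)) * transpose_mat (omega (N'+M))"
proof -
  define D where "D = dsum A (1\<^sub>m (2*M))"
  have Oo: "omega (N'+M) \<in> carrier_mat (2*N' + 2*M) (2*N' + 2*M)"
    and Oi: "omega (N+M) \<in> carrier_mat (2*N + 2*M) (2*N + 2*M)"
    by (rule omega_add_carrier)+
  have OoT: "transpose_mat (omega (N'+M)) \<in> carrier_mat (2*N' + 2*M) (2*N' + 2*M)" using Oo by simp
  have D: "D \<in> carrier_mat (2*N + 2*M) (2*N' + 2*M)" using A by (simp add: D_def)
  define L where "L = omega (N'+M) * transpose_mat D * transpose_mat (omega (N+M))"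
  have LV0: "L * V0 \<in> carrier_mat (2*N' + 2*M) (2*N + 2*M)" using Oo Oi D V0 by (auto simp: L_def)
  have "transpose_mat (channel_transfer N N' M A)
      = transpose_mat (transpose_mat (omega (N'+M))) * transpose_mat (omega (N+M) * D)"
    unfolding channel_transfer_def D_def[symmetric] by (rule transpose_mult[OF mult_carrier_mat[OF Oi D] OoT])
  also have "\<dots> = L"
    using transpose_mult[OF Oi D] Oo Oi D by (simp add: L_def)
  finally have "transpose_mat (channel_transfer N N' M A) = L" .
  moreover have "L * V0 * (omega (N+M) * D * transpose_mat (omega (N'+M)))
      = L * V0 * omega (N+M) * D * transpose_mat (omega (N'+M))"
    using assoc_mult_mat[OF LV0 mult_carrier_mat[OF Oi D] OoT] assoc_mult_mat[OF LV0 Oi D] by simp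
  ultimately show ?thesis
    by (simp add: channel_cov_def channel_transfer_def D_def[symmetric] L_def)
qed

lemma channel_cov_bilin:
  assumes A: "A \<in> carrier_mat (2*N) (2*N')" and B: "B \<in> carrier_mat (2*N') (2*N')"
    and V0: "V0 \<in> carrier_mat (2*N + 2*M) (2*N + 2*M)"
    and x: "xA \<in> carrier_vec (2*N')" "xB \<in> carrier_vec (2*M)"
    and y: "yA \<in> carrier_vec (2*N')" "yB \<in> carrier_vec (2*M)"
  shows "bilin (channel_cov N N' M A B V0) (xA @\<^sub>v xB) (yA @\<^sub>v yB) =
    bilin V0 ((omega N *\<^sub>v (A *\<^sub>v (transpose_mat (omega N') *\<^sub>v xA))) @\<^sub>v xB)
             ((omega N *\<^sub>v (A *\<^sub>v (transpose_mat (omega N') *\<^sub>v yA))) @\<^sub>v yB)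
    + bilin B (transpose_mat (omega N') *\<^sub>v xA) (transpose_mat (omega N') *\<^sub>v yA)"
proof -
  define P where "P = channel_transfer N N' M A"
  define Q where "Q = transpose_mat (omega (N'+M))"
  define DB where "DB = dsum B (0\<^sub>m (2*M) (2*M))"
  have P: "P \<in> carrier_mat (2*N + 2*M) (2*N' + 2*M)" using channel_transfer_carrier[OF A] by (simp add: P_def)
  have Q: "Q \<in> carrier_mat (2*N' + 2*M) (2*N' + 2*M)" using omega_add_carrier by (simp add: Q_def)
  have DB: "DB \<in> carrier_mat (2*N' + 2*M) (2*N' + 2*M)" using B by (simp add: DB_def)
  have xy: "xA @\<^sub>v xB \<in> carrier_vec (2*N' + 2*M)" "yA @\<^sub>v yB \<in> carrier_vec (2*N' + 2*M)"
    using x y by simp_all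
  have "transpose_mat P * V0 * P \<in> carrier_mat (2*N' + 2*M) (2*N' + 2*M)"
    "transpose_mat Q * DB * Q \<in> carrier_mat (2*N' + 2*M) (2*N' + 2*M)"
    using P Q V0 DB by auto
  then have "bilin (channel_cov N N' M A B V0) (xA @\<^sub>v xB) (yA @\<^sub>v yB)
      = bilin V0 (P *\<^sub>v (xA @\<^sub>v xB)) (P *\<^sub>v (yA @\<^sub>v yB)) + bilin DB (Q *\<^sub>v (xA @\<^sub>v xB)) (Q *\<^sub>v (yA @\<^sub>v yB))"
    using bilin_add xy bilin_sandwich[OF P V0 xy] bilin_sandwich[OF Q DB xy]
      channel_cov_sandwich[OF A V0, of B, folded P_def Q_def DB_def]
    by simp
  also have "\<dots> = bilin V0 ((omega N *\<^sub>v (A *\<^sub>v (transpose_mat (omega N') *\<^sub>v xA))) @\<^sub>v xB)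
             ((omega N *\<^sub>v (A *\<^sub>v (transpose_mat (omega N') *\<^sub>v yA))) @\<^sub>v yB)
    + bilin B (transpose_mat (omega N') *\<^sub>v xA) (transpose_mat (omega N') *\<^sub>v yA)"
    using A B x y
    by (simp add: P_def Q_def DB_def channel_transfer_mult_append omega_transpose_mult_append
        bilin_dsum[OF B zero_carrier_mat] bilin_zero_mat)
  finally show ?thesis .
qed

lemma channel_cov_carrier:
  assumes "A \<in> carrier_mat (2*N) (2*N')" "B \<in> carrier_mat (2*N') (2*N')"
    and "V0 \<in> carrier_mat (2*N + 2*M) (2*N + 2*M)"
  shows "channel_cov N N' M A B V0 \<in> carrier_mat (2*N' + 2*M) (2*N' + 2*M)"
  unfolding channel_cov_def using assms omega_add_carrier[of N M] omega_add_carrier[of N' M]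
  by (intro add_carrier_mat mult_carrier_mat transpose_carrier_mat dsum_carrier) auto

lemma noise_dominates_breaks_steerability:
  assumes A: "A \<in> carrier_mat (2*N) (2*N')" and B: "B \<in> carrier_mat (2*N') (2*N')"
    and nd: "noise_dominates N A B" and "gaussian_cov (N+M) V0"
  shows "breaks_steerability N N' M A B V0"
proof -
  have V0: "V0 \<in> carrier_mat (2*N + 2*M) (2*N + 2*M)" and cov:
    "\<forall>u\<in>carrier_vec (2*N + 2*M). \<forall>w\<in>carrier_vec (2*N + 2*M).
       bilin V0 u w = bilin V0 w u \<and> 2 * sympl (N+M) u w \<le> bilin V0 u u + bilin V0 w w"
    using assms(4) by (simp_all add: gaussian_cov_iff distrib_left)
  note noise = nd[unfolded noise_dominates_iff[OF A B], rule_format]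
  show ?thesis
    unfolding breaks_steerability_def non_steerable_iff[OF channel_cov_carrier[OF A B V0]]
  proof (intro ballI)
    fix xA yA xB yB :: "real vec"
    assume xA: "xA \<in> carrier_vec (2*N')" and xB: "xB \<in> carrier_vec (2*M)"
      and yA: "yA \<in> carrier_vec (2*N')" and yB: "yB \<in> carrier_vec (2*M)"
    define a where "a = transpose_mat (omega N') *\<^sub>v xA"
    define b where "b = transpose_mat (omega N') *\<^sub>v yA"
    have a: "a \<in> carrier_vec (2*N')" and b: "b \<in> carrier_vec (2*N')" by (simp_all add: a_def b_def)
    note cov_transfer = channel_cov_bilin[OF A B V0 xA xB yA yB, folded a_def b_def]
      channel_cov_bilin[OF A B V0 yA yB xA xB, folded a_def b_def]
      channel_cov_bilin[OF A B V0 xA xB xA xB, folded a_def b_def]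
      channel_cov_bilin[OF A B V0 yA yB yA yB, folded a_def b_def]
    have "2 * sympl (N+M) ((omega N *\<^sub>v (A *\<^sub>v a)) @\<^sub>v xB) ((omega N *\<^sub>v (A *\<^sub>v b)) @\<^sub>v yB)
      = - 2 * sympl N (A *\<^sub>v b) (A *\<^sub>v a) + 2 * sympl M xB yB"
      using A a b xB yB sympl_antisym[of N "A *\<^sub>v b" "A *\<^sub>v a"] by (simp add: sympl_append sympl_omega)
    then show "bilin (channel_cov N N' M A B V0) (xA @\<^sub>v xB) (yA @\<^sub>v yB) =
        bilin (channel_cov N N' M A B V0) (yA @\<^sub>v yB) (xA @\<^sub>v xB) \<and>
      2 * sympl M xB yB \<le> bilin (channel_cov N N' M A B V0) (xA @\<^sub>v xB) (xA @\<^sub>v xB) +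
        bilin (channel_cov N N' M A B V0) (yA @\<^sub>v yB) (yA @\<^sub>v yB)"
      using cov[rule_format, of "(omega N *\<^sub>v (A *\<^sub>v a)) @\<^sub>v xB" "(omega N *\<^sub>v (A *\<^sub>v b)) @\<^sub>v yB"]
        noise[OF a b] xA xB yA yB
      unfolding cov_transfer by simp
  qed
qed

lemma noise_dominates_imp_steerability_breaking:
  assumes "gaussian_channel N N' A B c" and "noise_dominates N A B"
  shows "gaussian_steerability_breaking N N' A B"
  using assms noise_dominates_breaks_steerability
  by (auto simp: gaussian_steerability_breaking_def gaussian_channel_def)

lemma mult_vec_diagonal:
  assumes M: "M \<in> carrier_mat n n" and q: "q \<in> carrier_vec n"
    and diag: "\<And>i j. i < n \<Longrightarrow> j < n \<Longrightarrow> M $$ (i,j) = (if i = j then d i else 0)"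
  shows "M *\<^sub>v q = vec n (\<lambda>i. d i * q$i)"
proof (rule eq_vecI)
  fix i assume "i < dim_vec (vec n (\<lambda>i. d i * q$i))"
  then have i: "i < n" by simp
  have "(M *\<^sub>v q) $ i = (\<Sum>j<n. M $$ (i,j) * q$j)"
    using M q i by (simp add: scalar_prod_def atLeast0LessThan)
  also have "\<dots> = (\<Sum>j<n. if j = i then d i * q$j else 0)"
    using i diag by (intro sum.cong) auto
  finally show "(M *\<^sub>v q) $ i = vec n (\<lambda>i. d i * q$i) $ i" using i by simp
qed (use M in simp)

lemma epr_cov_carrier: "epr_cov N r \<in> carrier_mat (2*N + 2*N) (2*N + 2*N)"
  unfolding epr_cov_def Let_def by (rule four_block_carrier_mat) auto

lemma epr_cov_mult_vec:
  assumes q1: "q1 \<in> carrier_vec (2*N)" and q2: "q2 \<in> carrier_vec (2*N)"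
  shows "epr_cov N r *\<^sub>v (q1 @\<^sub>v q2) =
    vec (2*N) (\<lambda>i. cosh r * q1$i + sinh r * (if even i then 1 else -1) * q2$i) @\<^sub>v
    vec (2*N) (\<lambda>i. sinh r * (if even i then 1 else -1) * q1$i + cosh r * q2$i)"
proof -
  define Z :: "real mat" where "Z = mat (2*N) (2*N) (\<lambda>(i,j). if i = j then (if even i then 1 else -1) else 0)"
  have C: "cosh r \<cdot>\<^sub>m 1\<^sub>m (2*N) \<in> carrier_mat (2*N) (2*N)" and S: "sinh r \<cdot>\<^sub>m Z \<in> carrier_mat (2*N) (2*N)"
    by (simp_all add: Z_def)
  have "(cosh r \<cdot>\<^sub>m 1\<^sub>m (2*N)) *\<^sub>v q = vec (2*N) (\<lambda>i. cosh r * q$i)" if "q \<in> carrier_vec (2*N)" for q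
    by (rule mult_vec_diagonal[OF C that]) auto
  moreover have "(sinh r \<cdot>\<^sub>m Z) *\<^sub>v q = vec (2*N) (\<lambda>i. sinh r * (if even i then 1 else -1) * q$i)"
    if "q \<in> carrier_vec (2*N)" for q
    by (rule mult_vec_diagonal[OF S that]) (auto simp: Z_def)
  ultimately show ?thesis
    unfolding epr_cov_def Z_def[symmetric] Let_def four_block_mat_mult_vec[OF C S S C q1 q2]
    using q1 q2 by (intro arg_cong2[where f = "(@\<^sub>v)"] eq_vecI) auto
qed

lemma epr_cov_bilin:
  assumes "p1 \<in> carrier_vec (2*N)" "p2 \<in> carrier_vec (2*N)" "q1 \<in> carrier_vec (2*N)" "q2 \<in> carrier_vec (2*N)"
  shows "bilin (epr_cov N r) (p1 @\<^sub>v p2) (q1 @\<^sub>v q2) = (\<Sum>i<2*N.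
    cosh r * (p1$i * q1$i + p2$i * q2$i) + sinh r * (if even i then 1 else -1) * (p1$i * q2$i + p2$i * q1$i))"
proof -
  have "bilin (epr_cov N r) (p1 @\<^sub>v p2) (q1 @\<^sub>v q2) =
      p1 \<bullet> vec (2*N) (\<lambda>i. cosh r * q1$i + sinh r * (if even i then 1 else -1) * q2$i) +
      p2 \<bullet> vec (2*N) (\<lambda>i. sinh r * (if even i then 1 else -1) * q1$i + cosh r * q2$i)"
    unfolding bilin_def epr_cov_mult_vec[OF assms(3,4)] by (rule scalar_prod_append) (use assms in auto)
  then show ?thesis
    by (simp add: scalar_prod_def atLeast0LessThan sum.distrib[symmetric] algebra_simps)
qed

lemma epr_mode_inequality:
  fixes c s a1 a2 a3 a4 b1 b2 b3 b4 :: real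
  assumes c: "c > 0" and cs: "c^2 = s^2 + 1"
  shows "0 \<le> c*(a1^2+a2^2+a3^2+a4^2+b1^2+b2^2+b3^2+b4^2) + 2*s*(a1*a3 - a2*a4 + b1*b3 - b2*b4)
            - 2*(a1*b2 - a2*b1 + a3*b4 - a4*b3)" (is "0 \<le> ?E")
proof -
  have "2*c*?E = (c*a1+s*a3-b2)^2 + (s*a1+c*a3-b4)^2 + (-a1+c*b2-s*b4)^2 + (-a3-s*b2+c*b4)^2
     + (c*a2-s*a4+b1)^2 + (-s*a2+c*a4+b3)^2 + (a2+c*b1+s*b3)^2 + (a4+s*b1+c*b3)^2
     + (c^2 - s^2 - 1) * (a1^2+a2^2+a3^2+a4^2+b1^2+b2^2+b3^2+b4^2)"
    by (simp add: power2_eq_square algebra_simps)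
  then have "0 \<le> 2*c*?E" using cs by simp
  then show ?thesis using c by (simp add: zero_le_mult_iff)
qed

lemma epr_cov_gaussian: "gaussian_cov (N+N) (epr_cov N r)"
  unfolding gaussian_cov_iff
proof (intro conjI)
  show "epr_cov N r \<in> carrier_mat (2*(N+N)) (2*(N+N))"
    using epr_cov_carrier[of N r] by (simp add: distrib_left)
  have "\<forall>a\<in>carrier_vec (2*N + 2*N). \<forall>b\<in>carrier_vec (2*N + 2*N).
      bilin (epr_cov N r) a b = bilin (epr_cov N r) b a \<and>
      2 * sympl (N+N) a b \<le> bilin (epr_cov N r) a a + bilin (epr_cov N r) b b"
    unfolding ball_carrier_vec_append
  proof (intro ballI conjI)
    fix a1 a2 b1 b2 :: "real vec"
    assume a: "a1 \<in> carrier_vec (2*N)" "a2 \<in> carrier_vec (2*N)"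
      and b: "b1 \<in> carrier_vec (2*N)" "b2 \<in> carrier_vec (2*N)"
    show "bilin (epr_cov N r) (a1 @\<^sub>v a2) (b1 @\<^sub>v b2) = bilin (epr_cov N r) (b1 @\<^sub>v b2) (a1 @\<^sub>v a2)"
      unfolding epr_cov_bilin[OF a b] epr_cov_bilin[OF b a] by (intro sum.cong) (auto simp: algebra_simps)
    define c where "c = cosh r"
    define s where "s = sinh r"
    define F where "F k = c*((a1$(2*k))^2+(a1$(2*k+1))^2+(a2$(2*k))^2+(a2$(2*k+1))^2
       +(b1$(2*k))^2+(b1$(2*k+1))^2+(b2$(2*k))^2+(b2$(2*k+1))^2)
       + 2*s*(a1$(2*k)*a2$(2*k) - a1$(2*k+1)*a2$(2*k+1) + b1$(2*k)*b2$(2*k) - b1$(2*k+1)*b2$(2*k+1))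
       - 2*(a1$(2*k)*b1$(2*k+1) - a1$(2*k+1)*b1$(2*k) + a2$(2*k)*b2$(2*k+1) - a2$(2*k+1)*b2$(2*k))" for k
    have "0 \<le> F k" for k
      unfolding F_def c_def s_def
      using cosh_real_ge_1[of r] by (intro epr_mode_inequality) (simp_all add: cosh_square_eq)
    moreover have "bilin (epr_cov N r) (a1 @\<^sub>v a2) (a1 @\<^sub>v a2) + bilin (epr_cov N r) (b1 @\<^sub>v b2) (b1 @\<^sub>v b2)
        - 2 * (sympl N a1 b1 + sympl N a2 b2) = (\<Sum>k<N. F k)"
      unfolding epr_cov_bilin[OF a a] epr_cov_bilin[OF b b]
        sum_lessThan_pairs sympl_def c_def[symmetric] s_def[symmetric]
      by (simp add: F_def sum.distrib sum_subtractf sum_distrib_left power2_eq_square algebra_simps)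
    ultimately show "2 * sympl (N+N) (a1 @\<^sub>v a2) (b1 @\<^sub>v b2)
        \<le> bilin (epr_cov N r) (a1 @\<^sub>v a2) (a1 @\<^sub>v a2) + bilin (epr_cov N r) (b1 @\<^sub>v b2) (b1 @\<^sub>v b2)"
      using sum_nonneg[of "{..<N}" F] sympl_append[OF a(1) b(1) a(2) b(2)] by simp
  qed
  then show "\<forall>a\<in>carrier_vec (2*(N+N)). \<forall>b\<in>carrier_vec (2*(N+N)).
      bilin (epr_cov N r) a b = bilin (epr_cov N r) b a \<and>
      2 * sympl (N+N) a b \<le> bilin (epr_cov N r) a a + bilin (epr_cov N r) b b"
    by (simp add: distrib_left)
qed

definition epr_partner :: "nat \<Rightarrow> real vec \<Rightarrow> real vec" where
  "epr_partner N v = vec (2*N) (\<lambda>i. if even i then - v$i else v$i)"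

lemma epr_partner_carrier [simp]: "epr_partner N v \<in> carrier_vec (2*N)"
  by (simp add: epr_partner_def)

lemma bilin_epr_cov_partner:
  assumes "v \<in> carrier_vec (2*N)"
  shows "bilin (epr_cov N r) (v @\<^sub>v epr_partner N v) (v @\<^sub>v epr_partner N v) = 2 * exp (- r) * (v \<bullet> v)"
proof -
  have "bilin (epr_cov N r) (v @\<^sub>v epr_partner N v) (v @\<^sub>v epr_partner N v) = (\<Sum>i<2*N. 2 * exp (- r) * (v$i * v$i))"
    unfolding epr_cov_bilin[OF assms epr_partner_carrier assms epr_partner_carrier]
    by (intro sum.cong) (auto simp: epr_partner_def cosh_minus_sinh[symmetric] algebra_simps)
  then show ?thesis using assms by (simp add: scalar_prod_def atLeast0LessThan sum_distrib_left)
qed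

lemma sympl_epr_partner:
  assumes "v \<in> carrier_vec (2*N)" "w \<in> carrier_vec (2*N)"
  shows "sympl N (epr_partner N v) (epr_partner N w) = - sympl N v w"
proof -
  have "2*k < 2*N" "2*k+1 < 2*N" if "k < N" for k using that by auto
  then show ?thesis
    using assms by (auto simp: sympl_def epr_partner_def sum_negf[symmetric] intro!: sum.cong)
qed

lemma epr_breaking_noise_bound:
  assumes A: "A \<in> carrier_mat (2*N) (2*N')" and B: "B \<in> carrier_mat (2*N') (2*N')"
    and breaks: "breaks_steerability N N' N A B (epr_cov N r)"
    and a: "a \<in> carrier_vec (2*N')" and b: "b \<in> carrier_vec (2*N')"
  shows "2 * sympl N (A *\<^sub>v b) (A *\<^sub>v a) \<le> bilin B a a + bilin B b b
    + 2 * exp (- r) * ((omega N *\<^sub>v (A *\<^sub>v a)) \<bullet> (omega N *\<^sub>v (A *\<^sub>v a))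
                     + (omega N *\<^sub>v (A *\<^sub>v b)) \<bullet> (omega N *\<^sub>v (A *\<^sub>v b)))"
proof -
  (* The vectors (v, epr_partner N v) are squeezed directions of the EPR state: their variance
     2 exp (-r) |v|^2 is all that the steering condition retains besides the channel noise. *)
  define \<alpha> where "\<alpha> = omega N *\<^sub>v (A *\<^sub>v a)"
  define \<beta> where "\<beta> = omega N *\<^sub>v (A *\<^sub>v b)"
  have \<alpha>: "\<alpha> \<in> carrier_vec (2*N)" and \<beta>: "\<beta> \<in> carrier_vec (2*N)" by (simp_all add: \<alpha>_def \<beta>_def)
  have xA: "omega N' *\<^sub>v a \<in> carrier_vec (2*N')" and yA: "omega N' *\<^sub>v b \<in> carrier_vec (2*N')" by simp_all
  have "transpose_mat (omega N') *\<^sub>v (omega N' *\<^sub>v a) = a" "transpose_mat (omega N') *\<^sub>v (omega N' *\<^sub>v b) = b"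
    using a b by (simp_all add: omega_transpose_omega_mult_vec)
  then have "bilin (channel_cov N N' N A B (epr_cov N r)) (omega N' *\<^sub>v a @\<^sub>v epr_partner N \<alpha>) (omega N' *\<^sub>v a @\<^sub>v epr_partner N \<alpha>)
      = 2 * exp (- r) * (\<alpha> \<bullet> \<alpha>) + bilin B a a"
    and "bilin (channel_cov N N' N A B (epr_cov N r)) (omega N' *\<^sub>v b @\<^sub>v epr_partner N \<beta>) (omega N' *\<^sub>v b @\<^sub>v epr_partner N \<beta>)
      = 2 * exp (- r) * (\<beta> \<bullet> \<beta>) + bilin B b b"
    using channel_cov_bilin[OF A B epr_cov_carrier xA _ xA, of "epr_partner N \<alpha>" "epr_partner N \<alpha>"]
      channel_cov_bilin[OF A B epr_cov_carrier yA _ yA, of "epr_partner N \<beta>" "epr_partner N \<beta>"]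
    by (simp_all add: \<alpha>_def[symmetric] \<beta>_def[symmetric] bilin_epr_cov_partner \<alpha> \<beta>)
  moreover have "sympl N (epr_partner N \<alpha>) (epr_partner N \<beta>) = sympl N (A *\<^sub>v b) (A *\<^sub>v a)"
    using A a b sympl_antisym[of N "A *\<^sub>v a" "A *\<^sub>v b"]
    by (simp add: sympl_epr_partner \<alpha> \<beta> \<alpha>_def \<beta>_def sympl_omega)
  moreover note breaks[unfolded breaks_steerability_def non_steerable_iff[OF channel_cov_carrier[OF A B epr_cov_carrier]],
      rule_format, OF xA epr_partner_carrier[of N \<alpha>] yA epr_partner_carrier[of N \<beta>]]
  ultimately show ?thesis unfolding \<alpha>_def[symmetric] \<beta>_def[symmetric] by (simp add: distrib_left)
qed

lemma epr_breaking_imp_noise_dominates: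
  assumes ch: "gaussian_channel N N' A B c"
    and breaks: "\<forall>r::real. r \<ge> 0 \<longrightarrow> breaks_steerability N N' N A B (epr_cov N r)"
  shows "noise_dominates N A B"
proof -
  have A: "A \<in> carrier_mat (2*N) (2*N')" and B: "B \<in> carrier_mat (2*N') (2*N')"
    using ch by (auto simp: gaussian_channel_def)
  show ?thesis unfolding noise_dominates_iff[OF A B]
  proof (intro ballI conjI)
    fix a b :: "real vec" assume a: "a \<in> carrier_vec (2*N')" and b: "b \<in> carrier_vec (2*N')"
    show "bilin B a b = bilin B b a" by (rule gaussian_channel_noise_symmetric[OF ch a b])
    define C where "C = 2 * ((omega N *\<^sub>v (A *\<^sub>v a)) \<bullet> (omega N *\<^sub>v (A *\<^sub>v a))
                     + (omega N *\<^sub>v (A *\<^sub>v b)) \<bullet> (omega N *\<^sub>v (A *\<^sub>v b)))"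
    have "((\<lambda>r. bilin B a a + bilin B b b + exp (- r) * C) \<longlongrightarrow> bilin B a a + bilin B b b + 0 * C) at_top"
      by (intro tendsto_intros filterlim_compose[OF exp_at_bot filterlim_uminus_at_bot_at_top])
    moreover have "\<forall>\<^sub>F r in at_top. 2 * sympl N (A *\<^sub>v b) (A *\<^sub>v a) \<le> bilin B a a + bilin B b b + exp (- r) * C"
      using epr_breaking_noise_bound[OF A B breaks[rule_format] a b]
      unfolding eventually_at_top_linorder C_def by (auto simp: algebra_simps)
    ultimately show "2 * sympl N (A *\<^sub>v b) (A *\<^sub>v a) \<le> bilin B a a + bilin B b b"
      using tendsto_lowerbound by fastforce
  qed
qed

theorem proposition5:
  fixes N N' :: nat and A B :: "real mat" and c :: "real vec"
  assumes "N \<ge> 1" and "N' \<ge> 1"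
    and "gaussian_channel N N' A B c"
  shows "(gaussian_incompatibility_breaking N N' A B c \<longleftrightarrow> gaussian_steerability_breaking N N' A B)
       \<and> (gaussian_steerability_breaking N N' A B \<longleftrightarrow>
            (\<forall>r::real. r \<ge> 0 \<longrightarrow> breaks_steerability N N' N A B (epr_cov N r)))"
proof -
  have "gaussian_incompatibility_breaking N N' A B c \<longleftrightarrow> noise_dominates N A B"
    using noise_dominates_imp_incompatibility_breaking[OF assms(3,2)]
      incompatibility_breaking_imp_noise_dominates[OF assms(3)] by blast
  moreover have "gaussian_steerability_breaking N N' A B
      \<Longrightarrow> \<forall>r::real. r \<ge> 0 \<longrightarrow> breaks_steerability N N' N A B (epr_cov N r)"
    using assms(1) epr_cov_gaussian unfolding gaussian_steerability_breaking_def by blast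
  moreover note noise_dominates_imp_steerability_breaking[OF assms(3)]
    epr_breaking_imp_noise_dominates[OF assms(3)]
  ultimately show ?thesis by blast
qed

end
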